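(* Let $S$ be an Enriques surface of the second Mendes Lopes–Pardini family and $\mathcal{R}=\{R_1,\dots,R_{12}\}$ as in the context. Then the elliptic fibrations in $\mathcal{E}(S,\mathcal{R})$ are: $1$ of type $(2\widetilde{A}_1^{\mathrm{HF}})$, $4$ of type $(\widetilde{A}_3^{\mathrm{F}})$, $8$ of type $(\widetilde{A}_3^{\mathrm{HF}})$, $2$ of type $(2\widetilde{D}_4^{\mathrm{F}})$. Moreover $\mathrm{cnd}(S,\mathcal{R})=5$, hence $\mathrm{nd}(S)\geq 5$, and the following classes form an isotropic sequence of classes of half-fibers of length $5$: $\tfrac12[R_1+R_2+R_3+R_6]$, $\tfrac12[R_1+R_4+R_5+R_6]$, $\tfrac12[R_7+R_8+R_9+R_{12}]$, $\tfrac12[R_7+R_{10}+R_{11}+R_{12}]$, $[R_1+R_{12}]$.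
   Context: Work over $\mathbb{C}$. Let $D_1,D_2$ be elliptic curves, $A=D_1\times D_2$, $a_i\in D_1$, $b_i\in D_2$ ($i=1,2,3$) the nonzero $2$-torsion points, and $\mathbb{Z}_2^3=\langle e_1,e_2,e_3\rangle$ acting by $e_1(x_1,x_2)=(x_1+a_1,x_2+b_1)$, $e_2(x_1,x_2)=(x_1+a_2,-x_2)$, $e_3(x_1,x_2)=(-x_1,x_2+b_3)$. The minimal resolution $S$ of $A/\mathbb{Z}_2^3$ (eight $A_1$ points) is an Enriques surface; the two projections induce elliptic fibrations each with two $\widetilde{D}_4$ fibers, whose components are twelve smooth rational curves $R_1,\dots,R_{12}$ with dual graph: $R_1\cdot R_{12}=2$, $R_6\cdot R_7=2$; each of $R_2,\dots,R_5$ meets each of $R_1,R_6$ with intersection $1$; each of $R_8,\dots,R_{11}$ meets each of $R_7,R_{12}$ with intersection $1$; no other intersections. The labeling is such that $\tfrac12(R_1+R_2+R_3+R_6)$, $\tfrac12(R_7+R_8+R_9+R_{12})$ and $\tfrac12(R_1+R_2+R_5+R_8+R_{10})+\tfrac14(R_2+R_3+R_4+R_5)$ lie in $\mathrm{Num}(S)$. Definitions: $\mathrm{Num}(S)$ = divisors mod numerical equivalence. Half-fibers: reduced curves $F$ with $2F$ a multiple fiber of an elliptic fibration. $\mathrm{nd}(S)$ = maximal length of a sequence of classes of half-fibers $f_1,\dots,f_m$ with $f_i\cdot f_j=1$ for $i\neq j$. For a finite set $\mathcal{R}$ of smooth rational curves: an $\mathcal{R}$-elliptic cycle is $C=\sum_{R\in\mathcal{R}}a_RR$,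 $a_R\ge0$, whose support has dual graph an extended Dynkin diagram $\widetilde{A}_n$ (for $n=1$: two curves with intersection $2$), $\widetilde{D}_n,\widetilde{E}_{6,7,8}$, with $a_R$ the multiplicities of the corresponding Kodaira fiber. Put $c(C)=\tfrac12[C]$ if $\tfrac12[C]\in\mathrm{Num}(S)$ (then $C$ is a fiber) and $c(C)=[C]$ otherwise (then $C$ is a half-fiber). $\mathsf{HF}(S,\mathcal{R})=\{c(C)\}$; $\mathrm{cnd}(S,\mathcal{R})$ = max $m$ with $f_1,\dots,f_m\in\mathsf{HF}(S,\mathcal{R})$, $f_i\cdot f_j=1-\delta_{ij}$; $\mathcal{E}(S,\mathcal{R})$ = set of elliptic fibrations $|2F|$ with $[F]\in\mathsf{HF}(S,\mathcal{R})$. The type of a fibration in $\mathcal{E}(S,\mathcal{R})$ is the formal sum, over the $\mathcal{R}$-elliptic cycles $C$ whose support is a fiber of it, of $X^{\mathrm{F}}$ (if $C$ is a fiber) or $X^{\mathrm{HF}}$ (if $C$ is a half-fiber), $X$ the extended Dynkin type of $C$. *)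

theory Defs
  imports Complex_Main "HOL-Library.Multiset"
begin

text \<open>Q-divisors supported on R_1,...,R_12: a coefficient function (only the
values at 1..12 matter).  Numerical classes of such Q-divisors are compared
via their intersection numbers with R_1,...,R_12 (these span Num(S) tensor Q,
the intersection matrix having rank 10 = rank Num(S)).\<close>

type_synonym qdiv = "nat \<Rightarrow> rat"

definition Rs :: "nat set" where "Rs = {1..12}"

definition Rint :: "nat \<Rightarrow> nat \<Rightarrow> int" where
  "Rint i j =
    (if i = j then -2
     else if {i,j} = {1,12} \<or> {i,j} = {6,7} then 2
     else if (i \<in> {2..5} \<and> j \<in> {1,6}) \<or> (j \<in> {2..5} \<and> i \<in> {1,6}) then 1
     else if (i \<in> {8..11} \<and> j \<in> {7,12}) \<or> (j \<in> {8..11} \<and> i \<in> {7,12}) then 1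
     else 0)"

definition dot :: "qdiv \<Rightarrow> qdiv \<Rightarrow> rat" where
  "dot d e = (\<Sum>i\<in>Rs. \<Sum>j\<in>Rs. of_int (Rint i j) * d i * e j)"

definition unitR :: "nat \<Rightarrow> qdiv" where
  "unitR i = (\<lambda>j. if j = i then 1 else 0)"

definition divR :: "(nat \<times> rat) list \<Rightarrow> qdiv" where
  "divR xs = (\<lambda>i. sum_list (map snd (filter (\<lambda>p. fst p = i) xs)))"

definition cls :: "qdiv \<Rightarrow> (nat \<Rightarrow> rat)" where
  "cls d = (\<lambda>i. if i \<in> Rs then dot (unitR i) d else 0)"

definition numeq :: "qdiv \<Rightarrow> qdiv \<Rightarrow> bool" where
  "numeq d e \<longleftrightarrow> cls d = cls e"

text \<open>The three classes the context says lie in Num(S).\<close>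
definition g1 :: qdiv where "g1 = divR [(1,1/2),(2,1/2),(3,1/2),(6,1/2)]"
definition g2 :: qdiv where "g2 = divR [(7,1/2),(8,1/2),(9,1/2),(12,1/2)]"
definition g3 :: qdiv where
  "g3 = divR [(1,1/2),(2,1/2),(5,1/2),(8,1/2),(10,1/2),(2,1/4),(3,1/4),(4,1/4),(5,1/4)]"

text \<open>N models Num(S) (as the set of Q-divisors supported on the R_i whose class
lies in Num(S)): a subgroup, closed under numerical equivalence, with integral
intersection form, containing the classes of the R_i and the three given classes.\<close>
definition num_model :: "qdiv set \<Rightarrow> bool" where
  "num_model N \<longleftrightarrow>
     (\<lambda>_. 0) \<in> N \<and>
     (\<forall>d\<in>N. \<forall>e\<in>N. (\<lambda>i. d i + e i) \<in> N) \<and>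
     (\<forall>d\<in>N. (\<lambda>i. - d i) \<in> N) \<and>
     (\<forall>d\<in>N. \<forall>e. numeq d e \<longrightarrow> e \<in> N) \<and>
     (\<forall>d\<in>N. \<forall>e\<in>N. dot d e \<in> \<int>) \<and>
     (\<forall>i\<in>Rs. unitR i \<in> N) \<and>
     g1 \<in> N \<and> g2 \<in> N \<and> g3 \<in> N"

datatype dyn = A nat | D nat | E nat

datatype fkind = Fib | HalfFib

definition valid_dyn :: "dyn \<Rightarrow> bool" where
  "valid_dyn X = (case X of A n \<Rightarrow> n \<ge> 1 | D n \<Rightarrow> n \<ge> 4 | E n \<Rightarrow> n \<in> {6,7,8})"

definition nv :: "dyn \<Rightarrow> nat" where
  "nv X = (case X of A n \<Rightarrow> n + 1 | D n \<Rightarrow> n + 1 | E n \<Rightarrow> n + 1)"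

text \<open>Undirected edges (for types other than A_1).
  A_n (n>=2): cycle 0-1-...-n-0.
  D_n: chain 0..n-4 (multiplicity 2), leaves n-3, n-2 at 0 and n-1, n at n-4.
  E_6: centre 0; arms 0-1-2, 0-3-4, 0-5-6.
  E_7: centre 0; arms 0-1-2-3, 0-4-5-6, 0-7.
  E_8: centre 0; arms 0-1-2-3-4-5, 0-6-7, 0-8.\<close>
definition dedge :: "dyn \<Rightarrow> nat \<Rightarrow> nat \<Rightarrow> bool" where
  "dedge X u v = (case X of
      A n \<Rightarrow> v = (u + 1) mod (n + 1)
    | D n \<Rightarrow> (u + 1 = v \<and> v \<le> n - 4) \<or> (u = 0 \<and> v \<in> {n-3, n-2}) \<or> (u = n - 4 \<and> v \<in> {n-1, n})
    | E n \<Rightarrow>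
        (if n = 6 then (u,v) \<in> {(0,1),(1,2),(0,3),(3,4),(0,5),(5,6)}
         else if n = 7 then (u,v) \<in> {(0,1),(1,2),(2,3),(0,4),(4,5),(5,6),(0,7)}
         else (u,v) \<in> {(0,1),(1,2),(2,3),(3,4),(4,5),(0,6),(6,7),(0,8)}))"

definition adj :: "dyn \<Rightarrow> nat \<Rightarrow> nat \<Rightarrow> nat" where
  "adj X u v = (if X = A 1 then 2 else if dedge X u v \<or> dedge X v u then 1 else 0)"

text \<open>Multiplicities of the corresponding Kodaira fiber.\<close>
definition mult :: "dyn \<Rightarrow> nat \<Rightarrow> nat" where
  "mult X u = (case X of
      A n \<Rightarrow> 1
    | D n \<Rightarrow> (if u \<le> n - 4 then 2 else 1)
    | E n \<Rightarrow>
        (if n = 6 then [3,2,1,2,1,2,1] ! u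
         else if n = 7 then [4,3,2,1,3,2,1,2] ! u
         else [6,5,4,3,2,1,4,2,3] ! u))"

definition ell_cycle_of :: "dyn \<Rightarrow> (nat \<Rightarrow> nat) \<Rightarrow> bool" where
  "ell_cycle_of X C \<longleftrightarrow> valid_dyn X \<and> (\<forall>i. i \<notin> Rs \<longrightarrow> C i = 0) \<and>
     (\<exists>\<phi>. inj_on \<phi> {..<nv X} \<and> \<phi> ` {..<nv X} = {i. C i \<noteq> 0} \<and>
        (\<forall>u<nv X. C (\<phi> u) = mult X u) \<and>
        (\<forall>u<nv X. \<forall>v<nv X. u \<noteq> v \<longrightarrow> Rint (\<phi> u) (\<phi> v) = int (adj X u v)))"

definition ell_cycle :: "(nat \<Rightarrow> nat) \<Rightarrow> bool" where
  "ell_cycle C \<longleftrightarrow> (\<exists>X. ell_cycle_of X C)"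

definition cycle_type :: "(nat \<Rightarrow> nat) \<Rightarrow> dyn" where
  "cycle_type C = (THE X. ell_cycle_of X C)"

definition qd :: "(nat \<Rightarrow> nat) \<Rightarrow> qdiv" where
  "qd C = (\<lambda>i. of_nat (C i))"

definition halfdiv :: "(nat \<Rightarrow> nat) \<Rightarrow> qdiv" where
  "halfdiv C = (\<lambda>i. of_nat (C i) / 2)"

definition is_fib :: "qdiv set \<Rightarrow> (nat \<Rightarrow> nat) \<Rightarrow> bool" where
  "is_fib N C \<longleftrightarrow> halfdiv C \<in> N"

definition cval :: "qdiv set \<Rightarrow> (nat \<Rightarrow> nat) \<Rightarrow> qdiv" where
  "cval N C = (if is_fib N C then halfdiv C else qd C)"

text \<open>HF(S,R) as a set of numerical classes.  The fibrations in E(S,R) are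
|2F| with [F] in HF(S,R); they are in bijection with these classes.\<close>
definition HFcls :: "qdiv set \<Rightarrow> (nat \<Rightarrow> rat) set" where
  "HFcls N = {cls (cval N C) | C. ell_cycle C}"

text \<open>Type of the fibration with half-fiber class phi: formal sum (multiset)
over the R-elliptic cycles C whose support is a fiber of it, i.e. c(C) = phi.\<close>
definition fib_type :: "qdiv set \<Rightarrow> (nat \<Rightarrow> rat) \<Rightarrow> (dyn \<times> fkind) multiset" where
  "fib_type N \<phi> = image_mset (\<lambda>C. (cycle_type C, if is_fib N C then Fib else HalfFib))
       (mset_set {C. ell_cycle C \<and> cls (cval N C) = \<phi>})"

definition iso_seq :: "qdiv set \<Rightarrow> qdiv list \<Rightarrow> bool" where
  "iso_seq N fs \<longleftrightarrow> (\<forall>d\<in>set fs. cls d \<in> HFcls N) \<and>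
     (\<forall>i<length fs. \<forall>j<length fs. dot (fs ! i) (fs ! j) = (if i = j then 0 else 1))"

definition cnd :: "qdiv set \<Rightarrow> nat" where
  "cnd N = (GREATEST m. \<exists>fs. length fs = m \<and> iso_seq N fs)"

end

theory Submission
  imports Defs
begin

text \<open>
  Everything reduces to finite computation with the twelve curves. An R-elliptic cycle is an
  embedding of an extended Dynkin diagram with at most twelve vertices into the dual graph, so a
  depth-first search over partial embeddings lists them all: two of extended type A_1, twelve of
  extended type A_3 and four of extended type D_4. Whether C/2 lies in Num(S) is certified either
  by writing it, up to numerical equivalence, as an integral combination of the R_i and the three
  given classes, or by exhibiting one of these that meets C/2 in a half-integer. Grouping the
  eighteen values c(C) by numerical class yields the fifteen fibrations and their types. No six of
  the values c(C) have pairwise intersection 1, while the five listed classes do.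
\<close>

lemma Rs_eq_upt: "Rs = set [1..<13]"
  by (auto simp: Rs_def)

lemma Rint_code [code]:
  "Rint i j =
    (if i = j then -2
     else if (i = 1 \<and> j = 12) \<or> (i = 12 \<and> j = 1) \<or> (i = 6 \<and> j = 7) \<or> (i = 7 \<and> j = 6) then 2
     else if (2 \<le> i \<and> i \<le> 5 \<and> (j = 1 \<or> j = 6)) \<or> (2 \<le> j \<and> j \<le> 5 \<and> (i = 1 \<or> i = 6)) then 1
     else if (8 \<le> i \<and> i \<le> 11 \<and> (j = 7 \<or> j = 12)) \<or> (8 \<le> j \<and> j \<le> 11 \<and> (i = 7 \<or> i = 12)) then 1
     else 0)"
  unfolding Rint_def by (auto simp: doubleton_eq_iff)

lemma Rint_sym: "Rint i j = Rint j i"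
  unfolding Rint_code by auto

lemma adj_sym: "adj X u v = adj X v u"
  unfolding adj_def by auto

text \<open>List entry \<open>i - 1\<close> holds the value at \<open>R\<^sub>i\<close>.\<close>

definition vec :: "'a::zero list \<Rightarrow> nat \<Rightarrow> 'a" where
  "vec xs i = (if 1 \<le> i \<and> i \<le> 12 then xs ! (i - 1) else 0)"

lemma nth_map_upt_Rs: "i \<in> Rs \<Longrightarrow> map f [1..<13] ! (i - 1) = f i"
  by (subst nth_map) (auto simp: Rs_def)

lemma map_vec: "length xs = 12 \<Longrightarrow> map (vec xs) [1..<13] = xs"
  by (rule nth_equalityI) (auto simp: vec_def Rs_def)

lemma vec_map:
  assumes "\<forall>i. i \<notin> Rs \<longrightarrow> f i = 0"
  shows "vec (map f [1..<13]) = f"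
proof
  fix i show "vec (map f [1..<13]) i = f i"
    using assms by (cases "i \<in> Rs") (auto simp: vec_def Rs_def)
qed

lemma vec_eq_iff_eq:
  "length xs = 12 \<Longrightarrow> length ys = 12 \<Longrightarrow> vec xs = vec ys \<longleftrightarrow> xs = ys"
  by (metis map_vec)

section \<open>Elliptic cycles as embeddings of extended Dynkin diagrams\<close>

text \<open>
  A list \<open>l\<close> sends vertex \<open>u\<close> of the model diagram to the curve \<open>R\<^bsub>l ! u\<^esub>\<close>.
\<close>

definition partial_embedding :: "dyn \<Rightarrow> nat list \<Rightarrow> bool" where
  "partial_embedding X l \<longleftrightarrow> distinct l \<and> set l \<subseteq> Rs \<and> length l \<le> nv X \<and>
     (\<forall>u<length l. \<forall>v<length l. u \<noteq> v \<longrightarrow> Rint (l ! u) (l ! v) = int (adj X u v))"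

definition extends_embedding :: "dyn \<Rightarrow> nat list \<Rightarrow> nat \<Rightarrow> bool" where
  "extends_embedding X l x \<longleftrightarrow> x \<notin> set l \<and>
     list_all (\<lambda>u. Rint (l ! u) x = int (adj X u (length l))) [0..<length l]"

function embeddings :: "dyn \<Rightarrow> nat list \<Rightarrow> nat list list" where
  "embeddings X l =
    (if nv X \<le> length l then [l]
     else concat (map (\<lambda>x. if extends_embedding X l x then embeddings X (l @ [x]) else []) [1..<13]))"
  by pat_completeness auto
termination by (relation "measure (\<lambda>(X, l). nv X - length l)") auto

declare embeddings.simps [simp del]

lemma partial_embedding_snoc:
  assumes "partial_embedding X l" "extends_embedding X l x" "x \<in> Rs" "length l < nv X"
  shows "partial_embedding X (l @ [x])"
  unfolding partial_embedding_def
proof (intro conjI allI impI)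
  show "distinct (l @ [x])" "set (l @ [x]) \<subseteq> Rs" "length (l @ [x]) \<le> nv X"
    using assms by (auto simp: partial_embedding_def extends_embedding_def)
next
  have new: "Rint (l ! u) x = int (adj X u (length l))" if "u < length l" for u
    using assms(2) that by (auto simp: extends_embedding_def list_all_iff)
  fix u v assume "u < length (l @ [x])" "v < length (l @ [x])" "u \<noteq> v"
  then consider "u < length l" "v < length l" | "u < length l" "v = length l" | "u = length l" "v < length l"
    by fastforce
  then show "Rint ((l @ [x]) ! u) ((l @ [x]) ! v) = int (adj X u v)"
  proof cases
    case 1 then show ?thesis using assms(1) \<open>u \<noteq> v\<close> by (simp add: partial_embedding_def nth_append)
  next
    case 2 then show ?thesis using new by (simp add: nth_append)
  next
    case 3 then show ?thesis using new[of v] by (simp add: nth_append Rint_sym adj_sym)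
  qed
qed

lemma embeddings_sound:
  "l' \<in> set (embeddings X l) \<Longrightarrow> partial_embedding X l \<Longrightarrow>
    partial_embedding X l' \<and> length l' = nv X"
proof (induction X l rule: embeddings.induct)
  case (1 X l)
  show ?case
  proof (cases "nv X \<le> length l")
    case True
    then show ?thesis using "1.prems" by (simp add: embeddings.simps partial_embedding_def)
  next
    case False
    with "1.prems"(1) obtain x where x: "x \<in> set [1..<13]" "extends_embedding X l x"
      "l' \<in> set (embeddings X (l @ [x]))"
      by (subst (asm) embeddings.simps) (auto split: if_splits)
    moreover have "x \<in> Rs" using x(1) by (simp add: Rs_def)
    ultimately have "partial_embedding X (l @ [x])"
      using partial_embedding_snoc "1.prems"(2) False by simp
    then show ?thesis using "1.IH" False x by blast
  qed
qed

lemma embeddings_complete: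
  assumes "partial_embedding X l'" "length l' = nv X"
  shows "k \<le> nv X \<Longrightarrow> l' \<in> set (embeddings X (take k l'))"
proof (induction "nv X - k" arbitrary: k)
  case 0
  then show ?case using assms(2) by (simp add: embeddings.simps)
next
  case (Suc m)
  then have k: "k < length l'" using assms(2) by simp
  have "extends_embedding X (take k l') (l' ! k)"
    using assms(1) k
    by (auto simp: extends_embedding_def partial_embedding_def list_all_iff in_set_conv_nth
      nth_eq_iff_index_eq)
  moreover have "l' ! k \<in> set [1..<13]"
    using assms(1) k nth_mem Rs_eq_upt by (fastforce simp: partial_embedding_def)
  moreover have "l' \<in> set (embeddings X (take k l' @ [l' ! k]))"
    using Suc.hyps(1)[of "Suc k"] Suc.hyps(2) k by (simp add: take_Suc_conv_app_nth)
  ultimately show ?case using k assms(2) by (subst embeddings.simps) force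
qed

definition cycle_of :: "dyn \<Rightarrow> nat list \<Rightarrow> nat \<Rightarrow> nat" where
  "cycle_of X l i = (\<Sum>u\<leftarrow>[0..<length l]. if l ! u = i then mult X u else 0)"

lemma cycle_of_nth:
  assumes "distinct l" "u < length l"
  shows "cycle_of X l (l ! u) = mult X u"
proof -
  have "cycle_of X l (l ! u) = (\<Sum>v<length l. if v = u then mult X v else 0)"
    using assms by (simp add: cycle_of_def sum_list_distinct_conv_sum_set atLeast0LessThan
      nth_eq_iff_index_eq cong: if_cong)
  then show ?thesis using assms(2) by simp
qed

lemma cycle_of_notin: "i \<notin> set l \<Longrightarrow> cycle_of X l i = 0"
  by (auto simp: cycle_of_def intro!: sum_list_eq_0_iff[THEN iffD2])

lemma mult_pos:
  assumes "valid_dyn X" "u < nv X"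
  shows "0 < mult X u"
proof (cases X)
  case (E n)
  have pos: "0 < xs ! u" if "u < length xs" "list_all ((<) 0) xs" for xs :: "nat list"
    using that by (simp add: list_all_length)
  from assms E show ?thesis by (auto simp: valid_dyn_def nv_def mult_def intro!: pos)
qed (auto simp: mult_def)

lemma embedding_if_ell_cycle_of:
  assumes "ell_cycle_of X C"
  obtains l where "partial_embedding X l" "length l = nv X" "C = cycle_of X l"
proof -
  from assms obtain \<phi> where outside: "\<forall>i. i \<notin> Rs \<longrightarrow> C i = 0"
    and inj: "inj_on \<phi> {..<nv X}" and supp: "\<phi> ` {..<nv X} = {i. C i \<noteq> 0}"
    and mult: "\<forall>u<nv X. C (\<phi> u) = mult X u"
    and adj: "\<forall>u<nv X. \<forall>v<nv X. u \<noteq> v \<longrightarrow> Rint (\<phi> u) (\<phi> v) = int (adj X u v)"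
    unfolding ell_cycle_of_def by blast
  define l where "l = map \<phi> [0..<nv X]"
  have set_l: "set l = {i. C i \<noteq> 0}"
    using supp by (simp add: l_def atLeast0LessThan)
  have "distinct l"
    using inj by (simp add: l_def distinct_map atLeast0LessThan)
  moreover have "partial_embedding X l"
    using \<open>distinct l\<close> set_l outside adj by (auto simp: partial_embedding_def l_def)
  moreover have "C = cycle_of X l"
  proof
    fix i show "C i = cycle_of X l i"
    proof (cases "i \<in> set l")
      case True
      then obtain u where "u < nv X" "i = l ! u" by (auto simp: l_def)
      then show ?thesis using mult cycle_of_nth[OF \<open>distinct l\<close>] by (simp add: l_def)
    qed (use set_l cycle_of_notin in auto)
  qed
  ultimately show ?thesis using that by (simp add: l_def)
qed

lemma ell_cycle_of_cycle_of:
  assumes valid: "valid_dyn X" and emb: "partial_embedding X l" and len: "length l = nv X"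
  shows "ell_cycle_of X (cycle_of X l)"
proof -
  have dist: "distinct l" and sub: "set l \<subseteq> Rs"
    using emb by (auto simp: partial_embedding_def)
  have mult: "cycle_of X l (l ! u) = mult X u" if "u < nv X" for u
    using cycle_of_nth[OF dist] that len by simp
  have "{i. cycle_of X l i \<noteq> 0} = set l"
  proof (intro set_eqI iffI)
    fix i assume "i \<in> {i. cycle_of X l i \<noteq> 0}"
    then show "i \<in> set l" using cycle_of_notin[of i l X] by auto
  next
    fix i assume "i \<in> set l"
    then obtain u where "u < nv X" "i = l ! u" using len by (auto simp: in_set_conv_nth)
    then show "i \<in> {i. cycle_of X l i \<noteq> 0}" using mult mult_pos[OF valid] by simp
  qed
  then show ?thesis
    unfolding ell_cycle_of_def using valid sub emb len mult
    by (intro conjI exI[of _ "(!) l"])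
      (auto simp: partial_embedding_def inj_on_def nth_eq_iff_index_eq in_set_conv_nth)
qed

lemma ell_cycle_of_iff_embedding:
  "ell_cycle_of X C \<longleftrightarrow>
     valid_dyn X \<and> (\<exists>l. partial_embedding X l \<and> length l = nv X \<and> C = cycle_of X l)"
proof
  assume C: "ell_cycle_of X C"
  then have "valid_dyn X" by (simp add: ell_cycle_of_def)
  with C show "valid_dyn X \<and> (\<exists>l. partial_embedding X l \<and> length l = nv X \<and> C = cycle_of X l)"
    by (blast elim: embedding_if_ell_cycle_of)
qed (use ell_cycle_of_cycle_of in blast)

definition dyn_candidates :: "dyn list" where
  "dyn_candidates = map A [1..<12] @ map D [4..<12] @ map E [6, 7, 8]"

lemma embedding_nv_le_12:
  assumes "partial_embedding X l" "length l = nv X"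
  shows "nv X \<le> 12"
proof -
  have "nv X = card (set l)"
    using assms by (simp add: partial_embedding_def distinct_card)
  also have "\<dots> \<le> card Rs"
    using assms(1) by (intro card_mono) (auto simp: partial_embedding_def Rs_def)
  finally show ?thesis by (simp add: Rs_def)
qed

lemma valid_dyn_iff_dyn_candidates:
  "nv X \<le> 12 \<Longrightarrow> valid_dyn X \<longleftrightarrow> X \<in> set dyn_candidates"
  by (cases X) (auto simp: dyn_candidates_def valid_dyn_def nv_def)

definition elliptic_cycles :: "(dyn \<times> nat list) list" where
  "elliptic_cycles = [(X, map (cycle_of X l) [1..<13]). X \<leftarrow> dyn_candidates, l \<leftarrow> embeddings X []]"

datatype num_certificate = Half_In_Num "(int \<times> nat) list" | Half_Not_In_Num nat

datatype cycle_info =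
  Cycle_Info (cyc_type: dyn) (cyc_coeffs: "nat list") (cyc_cert: num_certificate) (cyc_class: "rat list")

text \<open>
  Each entry lists the type and coefficients of a cycle \<open>C\<close>, a certificate deciding whether
  \<open>C/2\<close> lies in \<open>Num(S)\<close>, and the intersection numbers of \<open>c(C)\<close> with
  \<open>R\<^sub>1, \<dots>, R\<^sub>1\<^sub>2\<close>.
\<close>

definition cycle_table :: "cycle_info list" where
  "cycle_table =
    [Cycle_Info (A 1) [1,0,0,0,0,0,0,0,0,0,0,1]
       (Half_Not_In_Num 1)
       [0,1,1,1,1,0,0,1,1,1,1,0],
     Cycle_Info (A 1) [0,0,0,0,0,1,1,0,0,0,0,0]
       (Half_Not_In_Num 1)
       [0,1,1,1,1,0,0,1,1,1,1,0],
     Cycle_Info (A 3) [1,1,1,0,0,1,0,0,0,0,0,0]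
       (Half_In_Num [(1,12)])
       [0,0,0,1,1,0,1,0,0,0,0,1],
     Cycle_Info (A 3) [1,1,0,1,0,1,0,0,0,0,0,0]
       (Half_Not_In_Num 12)
       [0,0,2,0,2,0,2,0,0,0,0,2],
     Cycle_Info (A 3) [1,1,0,0,1,1,0,0,0,0,0,0]
       (Half_Not_In_Num 12)
       [0,0,2,2,0,0,2,0,0,0,0,2],
     Cycle_Info (A 3) [1,0,1,1,0,1,0,0,0,0,0,0]
       (Half_Not_In_Num 12)
       [0,2,0,0,2,0,2,0,0,0,0,2],
     Cycle_Info (A 3) [1,0,1,0,1,1,0,0,0,0,0,0]
       (Half_Not_In_Num 12)
       [0,2,0,2,0,0,2,0,0,0,0,2],
     Cycle_Info (A 3) [1,0,0,1,1,1,0,0,0,0,0,0]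
       (Half_In_Num [(2,14),(-1,1),(-1,4),(-1,7),(-1,9),(1,5),(-1,12)])
       [0,1,1,0,0,0,1,0,0,0,0,1],
     Cycle_Info (A 3) [0,0,0,0,0,0,1,1,1,0,0,1]
       (Half_In_Num [(1,13)])
       [1,0,0,0,0,1,0,0,0,1,1,0],
     Cycle_Info (A 3) [0,0,0,0,0,0,1,1,0,1,0,1]
       (Half_Not_In_Num 13)
       [2,0,0,0,0,2,0,0,2,0,2,0],
     Cycle_Info (A 3) [0,0,0,0,0,0,1,1,0,0,1,1]
       (Half_Not_In_Num 13)
       [2,0,0,0,0,2,0,0,2,2,0,0],
     Cycle_Info (A 3) [0,0,0,0,0,0,1,0,1,1,0,1]
       (Half_Not_In_Num 13)
       [2,0,0,0,0,2,0,2,0,0,2,0],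
     Cycle_Info (A 3) [0,0,0,0,0,0,1,0,1,0,1,1]
       (Half_Not_In_Num 13)
       [2,0,0,0,0,2,0,2,0,2,0,0],
     Cycle_Info (A 3) [0,0,0,0,0,0,1,0,0,1,1,1]
       (Half_In_Num [(2,14),(-1,1),(-1,4),(-1,7),(-1,9),(1,11),(-1,13)])
       [1,0,0,0,0,1,0,1,1,0,0,0],
     Cycle_Info (D 4) [2,1,1,1,1,0,0,0,0,0,0,0]
       (Half_In_Num [(2,14),(-1,1),(-1,4),(-1,7),(-1,9)])
       [0,0,0,0,0,2,0,0,0,0,0,2],
     Cycle_Info (D 4) [0,1,1,1,1,2,0,0,0,0,0,0]
       (Half_In_Num [(2,14),(-1,1),(-1,4),(-1,7),(-1,9),(-1,0),(1,5)])
       [2,0,0,0,0,0,2,0,0,0,0,0],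
     Cycle_Info (D 4) [0,0,0,0,0,0,2,1,1,1,1,0]
       (Half_In_Num [(2,14),(-1,1),(-1,4),(-1,7),(-1,9)])
       [0,0,0,0,0,2,0,0,0,0,0,2],
     Cycle_Info (D 4) [0,0,0,0,0,0,0,1,1,1,1,2]
       (Half_In_Num [(2,14),(-1,1),(-1,4),(-1,7),(-1,9),(-1,0),(1,5)])
       [2,0,0,0,0,0,2,0,0,0,0,0]]"

lemma set_elliptic_cycles:
  "set elliptic_cycles = set (map (\<lambda>t. (cyc_type t, cyc_coeffs t)) cycle_table)"
  by code_simp

lemma ell_cycle_of_iff_elliptic_cycles:
  "ell_cycle_of X C \<longleftrightarrow> (\<exists>v. (X, v) \<in> set elliptic_cycles \<and> C = vec v)"
proof
  assume "ell_cycle_of X C"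
  then obtain l where valid: "valid_dyn X" and emb: "partial_embedding X l"
    and len: "length l = nv X" and C: "C = cycle_of X l"
    unfolding ell_cycle_of_iff_embedding by blast
  have "X \<in> set dyn_candidates"
    using valid_dyn_iff_dyn_candidates embedding_nv_le_12[OF emb len] valid by blast
  moreover have "l \<in> set (embeddings X [])"
    using embeddings_complete[OF emb len, of 0] by simp
  moreover have "C = vec (map C [1..<13])"
    using emb cycle_of_notin C by (intro vec_map[symmetric]) (auto simp: partial_embedding_def)
  ultimately show "\<exists>v. (X, v) \<in> set elliptic_cycles \<and> C = vec v"
    using C by (auto simp: elliptic_cycles_def)
next
  assume "\<exists>v. (X, v) \<in> set elliptic_cycles \<and> C = vec v"
  then obtain l where X: "X \<in> set dyn_candidates" and l: "l \<in> set (embeddings X [])"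
    and C: "C = vec (map (cycle_of X l) [1..<13])"
    by (auto simp: elliptic_cycles_def)
  have emb: "partial_embedding X l" and len: "length l = nv X"
    using embeddings_sound[OF l] by (auto simp: partial_embedding_def)
  have "C = cycle_of X l"
    using emb cycle_of_notin C by (intro trans[OF C vec_map]) (auto simp: partial_embedding_def)
  then show "ell_cycle_of X C"
    unfolding ell_cycle_of_iff_embedding
    using emb len X valid_dyn_iff_dyn_candidates embedding_nv_le_12[OF emb len] by blast
qed

lemma cycle_table_shape:
  "distinct (map cyc_coeffs cycle_table) \<and>
   list_all (\<lambda>t. length (cyc_coeffs t) = 12 \<and> length (cyc_class t) = 12) cycle_table"
  by code_simp

lemma length_cyc_coeffs: "t \<in> set cycle_table \<Longrightarrow> length (cyc_coeffs t) = 12"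
  and length_cyc_class: "t \<in> set cycle_table \<Longrightarrow> length (cyc_class t) = 12"
  using cycle_table_shape by (auto simp: list_all_iff)

lemma inj_on_vec_cyc_coeffs: "inj_on (\<lambda>t. vec (cyc_coeffs t)) (set cycle_table)"
proof (rule inj_onI)
  fix s t assume st: "s \<in> set cycle_table" "t \<in> set cycle_table" "vec (cyc_coeffs s) = vec (cyc_coeffs t)"
  then have "cyc_coeffs s = cyc_coeffs t"
    using vec_eq_iff_eq length_cyc_coeffs by blast
  then show "s = t"
    using st cycle_table_shape by (auto simp: distinct_map inj_on_def)
qed

lemma ell_cycle_iff_cycle_table: "ell_cycle C \<longleftrightarrow> (\<exists>t\<in>set cycle_table. C = vec (cyc_coeffs t))"
  unfolding ell_cycle_def ell_cycle_of_iff_elliptic_cycles set_elliptic_cycles by auto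

lemma cycle_type_cycle_table:
  assumes t: "t \<in> set cycle_table"
  shows "cycle_type (vec (cyc_coeffs t)) = cyc_type t"
  unfolding cycle_type_def
proof (rule the_equality)
  show "ell_cycle_of (cyc_type t) (vec (cyc_coeffs t))"
    unfolding ell_cycle_of_iff_elliptic_cycles set_elliptic_cycles using t by auto
next
  fix Y assume "ell_cycle_of Y (vec (cyc_coeffs t))"
  then obtain s where "s \<in> set cycle_table" "Y = cyc_type s" "vec (cyc_coeffs t) = vec (cyc_coeffs s)"
    unfolding ell_cycle_of_iff_elliptic_cycles set_elliptic_cycles by auto
  then show "Y = cyc_type t"
    using inj_on_vec_cyc_coeffs t by (auto dest: inj_onD)
qed

section \<open>The intersection form on coefficient lists\<close>

definition cls_list :: "qdiv \<Rightarrow> rat list" where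
  "cls_list d = map (\<lambda>i. \<Sum>j\<leftarrow>[1..<13]. of_int (Rint i j) * d j) [1..<13]"

definition dot_list :: "qdiv \<Rightarrow> rat list \<Rightarrow> rat" where
  "dot_list d w = (\<Sum>i\<leftarrow>[1..<13]. d i * w ! (i - 1))"

lemma length_cls_list [simp]: "length (cls_list d) = 12"
  by (simp add: cls_list_def)

lemma sum_list_upt_eq_sum_Rs: "(\<Sum>i\<leftarrow>[1..<13]. f i) = (\<Sum>i\<in>Rs. f i)"
  unfolding Rs_eq_upt by (rule interv_sum_list_conv_sum_set_nat)

lemma dot_unitR:
  assumes "i \<in> Rs"
  shows "dot (unitR i) d = (\<Sum>j\<in>Rs. of_int (Rint i j) * d j)"
proof -
  have "dot (unitR i) d = (\<Sum>i'\<in>Rs. if i' = i then \<Sum>j\<in>Rs. of_int (Rint i' j) * d j else 0)"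
    unfolding dot_def unitR_def by (rule sum.cong) auto
  then show ?thesis using assms by (simp add: Rs_def)
qed

lemma cls_eq_vec_cls_list: "cls d = vec (cls_list d)"
proof
  fix i show "cls d i = vec (cls_list d) i"
  proof (cases "i \<in> Rs")
    case True
    then have "cls d i = (\<Sum>j\<in>Rs. of_int (Rint i j) * d j)"
      by (simp add: cls_def dot_unitR)
    also have "\<dots> = vec (cls_list d) i"
      unfolding sum_list_upt_eq_sum_Rs[symmetric] vec_def cls_list_def nth_map_upt_Rs[OF True]
      using True by (simp add: Rs_def)
    finally show ?thesis .
  qed (auto simp: cls_def vec_def Rs_def)
qed

lemma numeq_iff_cls_list: "numeq d e \<longleftrightarrow> cls_list d = cls_list e"
  unfolding numeq_def cls_eq_vec_cls_list by (simp add: vec_eq_iff_eq)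

lemma dot_eq_sum_cls: "dot d e = (\<Sum>i\<in>Rs. d i * cls e i)"
  unfolding dot_def
  by (rule sum.cong) (simp_all add: cls_def dot_unitR sum_distrib_left mult_ac)

lemma dot_sym: "dot d e = dot e d"
  unfolding dot_def by (subst sum.swap) (simp add: Rint_sym mult_ac)

lemma dot_cong_cls:
  assumes "cls d = cls d'" "cls e = cls e'"
  shows "dot d e = dot d' e'"
  using assms by (metis dot_eq_sum_cls dot_sym)

lemma dot_eq_dot_list: "dot d e = dot_list d (cls_list e)"
  unfolding dot_eq_sum_cls dot_list_def sum_list_upt_eq_sum_Rs cls_eq_vec_cls_list
  by (rule sum.cong) (auto simp: vec_def Rs_def)

section \<open>Fibers and half-fibers\<close>

definition generators :: "qdiv list" where
  "generators = map unitR [1..<13] @ [g1, g2, g3]"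

definition int_comb :: "(int \<times> nat) list \<Rightarrow> qdiv" where
  "int_comb ps i = (\<Sum>(k, j)\<leftarrow>ps. of_int k * (generators ! j) i)"

fun certifies :: "num_certificate \<Rightarrow> nat list \<Rightarrow> bool" where
  "certifies (Half_In_Num ps) v \<longleftrightarrow>
     list_all (\<lambda>(k, j). j < length generators) ps \<and> cls_list (int_comb ps) = cls_list (halfdiv (vec v))"
| "certifies (Half_Not_In_Num j) v \<longleftrightarrow>
     j < length generators \<and> frac (dot_list (halfdiv (vec v)) (cls_list (generators ! j))) = 1/2"

fun half_in_num :: "num_certificate \<Rightarrow> bool" where
  "half_in_num (Half_In_Num _) \<longleftrightarrow> True"
| "half_in_num (Half_Not_In_Num _) \<longleftrightarrow> False"

definition c_divisor :: "cycle_info \<Rightarrow> qdiv" where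
  "c_divisor t =
     (if half_in_num (cyc_cert t) then halfdiv (vec (cyc_coeffs t)) else qd (vec (cyc_coeffs t)))"

definition cycle_kind :: "cycle_info \<Rightarrow> dyn \<times> fkind" where
  "cycle_kind t = (cyc_type t, if half_in_num (cyc_cert t) then Fib else HalfFib)"

definition table_fib_type :: "rat list \<Rightarrow> (dyn \<times> fkind) multiset" where
  "table_fib_type w = mset (map cycle_kind (filter (\<lambda>t. cyc_class t = w) cycle_table))"

lemma cycle_table_certified:
  "list_all (\<lambda>t. certifies (cyc_cert t) (cyc_coeffs t) \<and> cls_list (c_divisor t) = cyc_class t) cycle_table"
  by code_simp

lemma cls_c_divisor: "t \<in> set cycle_table \<Longrightarrow> cls (c_divisor t) = vec (cyc_class t)"
  using cycle_table_certified by (simp add: list_all_iff cls_eq_vec_cls_list)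

context
  fixes N :: "qdiv set"
  assumes N: "num_model N"
begin

lemma zero_mem: "(\<lambda>_. 0) \<in> N"
  and add_mem: "d \<in> N \<Longrightarrow> e \<in> N \<Longrightarrow> (\<lambda>i. d i + e i) \<in> N"
  and uminus_mem: "d \<in> N \<Longrightarrow> (\<lambda>i. - d i) \<in> N"
  and numeq_mem: "d \<in> N \<Longrightarrow> numeq d e \<Longrightarrow> e \<in> N"
  and dot_mem_Ints: "d \<in> N \<Longrightarrow> e \<in> N \<Longrightarrow> dot d e \<in> \<int>"
  using N unfolding num_model_def by blast+

lemma generators_mem: "j < length generators \<Longrightarrow> generators ! j \<in> N"
  using N nth_mem[of j generators] by (auto simp: num_model_def generators_def Rs_eq_upt)

lemma of_nat_scale_mem: "d \<in> N \<Longrightarrow> (\<lambda>i. of_nat n * d i) \<in> N"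
proof (induction n)
  case 0
  then show ?case using zero_mem by simp
next
  case (Suc n)
  then show ?case using add_mem[OF Suc.IH[OF Suc.prems] Suc.prems] by (simp add: algebra_simps)
qed

lemma of_int_scale_mem:
  assumes "d \<in> N"
  shows "(\<lambda>i. of_int k * d i) \<in> N"
proof (cases "k \<ge> 0")
  case True
  then show ?thesis using of_nat_scale_mem[OF assms, of "nat k"] by simp
next
  case False
  then show ?thesis using uminus_mem[OF of_nat_scale_mem[OF assms, of "nat (- k)"]] by simp
qed

lemma int_comb_mem: "\<forall>(k, j)\<in>set ps. j < length generators \<Longrightarrow> int_comb ps \<in> N"
proof (induction ps)
  case Nil
  then show ?case using zero_mem by (simp add: int_comb_def)
next
  case (Cons p ps)
  obtain k j where p: "p = (k, j)" by fastforce
  have "(\<lambda>i. of_int k * (generators ! j) i) \<in> N" "int_comb ps \<in> N"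
    using Cons generators_mem of_int_scale_mem p by auto
  from add_mem[OF this] show ?case by (simp add: int_comb_def p)
qed

lemma is_fib_iff_half_in_num:
  assumes cert: "certifies c v"
  shows "is_fib N (vec v) \<longleftrightarrow> half_in_num c"
proof (cases c)
  case (Half_In_Num ps)
  then have "int_comb ps \<in> N" "numeq (int_comb ps) (halfdiv (vec v))"
    using cert int_comb_mem by (auto simp: list_all_iff numeq_iff_cls_list)
  then show ?thesis using numeq_mem Half_In_Num by (simp add: is_fib_def)
next
  case (Half_Not_In_Num j)
  have "halfdiv (vec v) \<notin> N"
  proof
    assume "halfdiv (vec v) \<in> N"
    then have "dot (halfdiv (vec v)) (generators ! j) \<in> \<int>"
      using dot_mem_Ints generators_mem cert Half_Not_In_Num by simp
    then have "frac (dot_list (halfdiv (vec v)) (cls_list (generators ! j))) = 0"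
      by (simp add: dot_eq_dot_list)
    moreover have "frac (dot_list (halfdiv (vec v)) (cls_list (generators ! j))) = 1/2"
      using cert Half_Not_In_Num by simp
    ultimately show False by linarith
  qed
  then show ?thesis using Half_Not_In_Num by (simp add: is_fib_def)
qed

lemma is_fib_cycle_table:
  "t \<in> set cycle_table \<Longrightarrow> is_fib N (vec (cyc_coeffs t)) \<longleftrightarrow> half_in_num (cyc_cert t)"
  using cycle_table_certified is_fib_iff_half_in_num by (simp add: list_all_iff)

lemma cls_cval_cycle_table:
  "t \<in> set cycle_table \<Longrightarrow> cls (cval N (vec (cyc_coeffs t))) = vec (cyc_class t)"
  using cls_c_divisor is_fib_cycle_table by (simp add: cval_def c_divisor_def)

lemma HFcls_eq: "HFcls N = (\<lambda>t. vec (cyc_class t)) ` set cycle_table"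
proof (intro set_eqI iffI)
  fix x assume "x \<in> HFcls N"
  then show "x \<in> (\<lambda>t. vec (cyc_class t)) ` set cycle_table"
    using cls_cval_cycle_table by (auto simp: HFcls_def ell_cycle_iff_cycle_table)
next
  fix x assume "x \<in> (\<lambda>t. vec (cyc_class t)) ` set cycle_table"
  then obtain t where "t \<in> set cycle_table" "x = vec (cyc_class t)" by blast
  then show "x \<in> HFcls N"
    unfolding HFcls_def ell_cycle_iff_cycle_table using cls_cval_cycle_table
    by (intro CollectI exI[of _ "vec (cyc_coeffs t)"]) auto
qed

lemma fib_type_vec:
  assumes "length w = 12"
  shows "fib_type N (vec w) = table_fib_type w"
proof -
  let ?ts = "filter (\<lambda>t. cyc_class t = w) cycle_table"
  have cycles: "{C. ell_cycle C \<and> cls (cval N C) = vec w} = set (map (\<lambda>t. vec (cyc_coeffs t)) ?ts)"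
    using cls_cval_cycle_table vec_eq_iff_eq[OF length_cyc_class assms]
    by (auto simp: ell_cycle_iff_cycle_table)
  have "distinct (map (\<lambda>t. vec (cyc_coeffs t)) ?ts)"
    using cycle_table_shape inj_on_vec_cyc_coeffs
    by (auto simp: distinct_map intro: distinct_filter inj_on_subset)
  then have "mset_set {C. ell_cycle C \<and> cls (cval N C) = vec w} = mset (map (\<lambda>t. vec (cyc_coeffs t)) ?ts)"
    unfolding cycles by (rule mset_set_set)
  then show ?thesis
    using cycle_type_cycle_table is_fib_cycle_table
    by (auto simp: fib_type_def table_fib_type_def cycle_kind_def multiset.map_comp
      intro!: image_mset_cong)
qed

lemma fibration_types_cycle_table:
  "image_mset (fib_type N) (mset_set (HFcls N)) =
   mset (map table_fib_type (remdups (map cyc_class cycle_table)))"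
proof -
  let ?ws = "remdups (map cyc_class cycle_table)"
  have classes: "HFcls N = set (map vec ?ws)"
    by (auto simp: HFcls_eq)
  have "distinct (map vec ?ws)"
    using length_cyc_class vec_eq_iff_eq by (auto simp: distinct_map inj_on_def)
  then have "mset_set (HFcls N) = mset (map vec ?ws)"
    unfolding classes by (rule mset_set_set)
  then show ?thesis
    using fib_type_vec length_cyc_class by (auto simp: multiset.map_comp intro!: image_mset_cong)
qed

end

lemma fibration_types_eval:
  "mset (map table_fib_type (remdups (map cyc_class cycle_table))) =
   replicate_mset 1 {#(A 1, HalfFib), (A 1, HalfFib)#}
   + replicate_mset 4 {#(A 3, Fib)#}
   + replicate_mset 8 {#(A 3, HalfFib)#}
   + replicate_mset 2 {#(D 4, Fib), (D 4, Fib)#}"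
  by code_simp

section \<open>Isotropic sequences\<close>

fun exists_clique :: "('a \<Rightarrow> 'a \<Rightarrow> bool) \<Rightarrow> nat \<Rightarrow> 'a list \<Rightarrow> bool" where
  "exists_clique R 0 xs = True"
| "exists_clique R (Suc k) xs = list_ex (\<lambda>x. exists_clique R k (filter (R x) xs)) xs"

lemma exists_clique_if_pairwise:
  assumes "set ys \<subseteq> set xs" "\<forall>a<length ys. \<forall>b<length ys. a \<noteq> b \<longrightarrow> R (ys ! a) (ys ! b)"
  shows "exists_clique R (length ys) xs"
  using assms
proof (induction ys arbitrary: xs)
  case (Cons y ys)
  have "R y z" if z: "z \<in> set ys" for z
  proof -
    obtain b where "b < length ys" "z = ys ! b" using z by (auto simp: in_set_conv_nth)
    then show ?thesis using Cons.prems(2)[rule_format, of 0 "Suc b"] by simp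
  qed
  then have "set ys \<subseteq> set (filter (R y) xs)"
    using Cons.prems(1) by auto
  moreover have "\<forall>a<length ys. \<forall>b<length ys. a \<noteq> b \<longrightarrow> R (ys ! a) (ys ! b)"
  proof (intro allI impI)
    fix a b assume "a < length ys" "b < length ys" "a \<noteq> b"
    then show "R (ys ! a) (ys ! b)" using Cons.prems(2)[rule_format, of "Suc a" "Suc b"] by simp
  qed
  ultimately have "exists_clique R (length ys) (filter (R y) xs)"
    by (rule Cons.IH)
  then show ?case using Cons.prems(1) by (auto simp: list_ex_iff)
qed simp

definition gram_matrix :: "int list list" where
  "gram_matrix =
    [[0,0,1,2,2,2,2,1,1,2,2,2,2,1,2,2,2,2],
     [0,0,1,2,2,2,2,1,1,2,2,2,2,1,2,2,2,2],
     [1,1,0,1,1,1,1,1,1,2,2,2,2,1,1,1,1,1],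
     [2,2,1,0,2,2,4,1,2,4,4,4,4,2,2,2,2,2],
     [2,2,1,2,0,4,2,1,2,4,4,4,4,2,2,2,2,2],
     [2,2,1,2,4,0,2,1,2,4,4,4,4,2,2,2,2,2],
     [2,2,1,4,2,2,0,1,2,4,4,4,4,2,2,2,2,2],
     [1,1,1,1,1,1,1,0,1,2,2,2,2,1,1,1,1,1],
     [1,1,1,2,2,2,2,1,0,1,1,1,1,1,1,1,1,1],
     [2,2,2,4,4,4,4,2,1,0,2,2,4,1,2,2,2,2],
     [2,2,2,4,4,4,4,2,1,2,0,4,2,1,2,2,2,2],
     [2,2,2,4,4,4,4,2,1,2,4,0,2,1,2,2,2,2],
     [2,2,2,4,4,4,4,2,1,4,2,2,0,1,2,2,2,2],
     [1,1,1,2,2,2,2,1,1,1,1,1,1,0,1,1,1,1],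
     [2,2,1,2,2,2,2,1,1,2,2,2,2,1,0,2,0,2],
     [2,2,1,2,2,2,2,1,1,2,2,2,2,1,2,0,2,0],
     [2,2,1,2,2,2,2,1,1,2,2,2,2,1,0,2,0,2],
     [2,2,1,2,2,2,2,1,1,2,2,2,2,1,2,0,2,0]]"

lemma gram_matrix_correct:
  "list_all (\<lambda>i. list_all (\<lambda>j.
      dot_list (c_divisor (cycle_table ! i)) (cyc_class (cycle_table ! j)) = of_int (gram_matrix ! i ! j))
    [0..<length cycle_table]) [0..<length cycle_table]"
  by code_simp

lemma dot_c_divisor:
  assumes "i < length cycle_table" "j < length cycle_table"
  shows "dot (c_divisor (cycle_table ! i)) (c_divisor (cycle_table ! j)) = of_int (gram_matrix ! i ! j)"
  using gram_matrix_correct cycle_table_certified assms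
  by (simp add: dot_eq_dot_list list_all_iff)

lemma no_clique_of_6: "\<not> exists_clique (\<lambda>i j. gram_matrix ! i ! j = 1) 6 [0..<length cycle_table]"
  by code_simp

lemma iso_seq_length_le:
  assumes N: "num_model N" and iso: "iso_seq N fs"
  shows "length fs \<le> 5"
proof (rule ccontr)
  assume "\<not> length fs \<le> 5"
  then have long: "6 \<le> length fs" by simp
  have "\<exists>i. i < length cycle_table \<and> cls (fs ! a) = cls (c_divisor (cycle_table ! i))"
    if "a < length fs" for a
  proof -
    have "cls (fs ! a) \<in> HFcls N" using iso that by (simp add: iso_seq_def)
    then obtain i where "i < length cycle_table" "cls (fs ! a) = vec (cyc_class (cycle_table ! i))"
      by (auto simp: HFcls_eq[OF N] in_set_conv_nth)
    then show ?thesis using cls_c_divisor[OF nth_mem] by metis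
  qed
  then obtain idx where idx: "\<And>a. a < length fs \<Longrightarrow>
      idx a < length cycle_table \<and> cls (fs ! a) = cls (c_divisor (cycle_table ! idx a))"
    by metis
  have "gram_matrix ! idx a ! idx b = 1" if ab: "a < 6" "b < 6" "a \<noteq> b" for a b
  proof -
    have a: "idx a < length cycle_table" "cls (c_divisor (cycle_table ! idx a)) = cls (fs ! a)"
      and b: "idx b < length cycle_table" "cls (c_divisor (cycle_table ! idx b)) = cls (fs ! b)"
      using idx[of a] idx[of b] ab long by auto
    have "of_int (gram_matrix ! idx a ! idx b) = dot (c_divisor (cycle_table ! idx a)) (c_divisor (cycle_table ! idx b))"
      using dot_c_divisor[OF a(1) b(1)] by simp
    also have "\<dots> = dot (fs ! a) (fs ! b)"
      using a(2) b(2) by (rule dot_cong_cls)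
    also have "\<dots> = 1"
      using iso ab long by (simp add: iso_seq_def)
    finally show ?thesis by simp
  qed
  then have "exists_clique (\<lambda>i j. gram_matrix ! i ! j = 1) (length (map idx [0..<6])) [0..<length cycle_table]"
    using idx long by (intro exists_clique_if_pairwise) auto
  then show False using no_clique_of_6 by simp
qed

definition isotropic_half_fibers :: "qdiv list" where
  "isotropic_half_fibers =
     [divR [(1,1/2),(2,1/2),(3,1/2),(6,1/2)],
      divR [(1,1/2),(4,1/2),(5,1/2),(6,1/2)],
      divR [(7,1/2),(8,1/2),(9,1/2),(12,1/2)],
      divR [(7,1/2),(10,1/2),(11,1/2),(12,1/2)],
      divR [(1,1),(12,1)]]"

lemma isotropic_half_fibers_eval:
  "length isotropic_half_fibers = 5 \<and>
   list_all (\<lambda>d. cls_list d \<in> set (map cyc_class cycle_table)) isotropic_half_fibers \<and>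
   list_all (\<lambda>i. list_all (\<lambda>j.
       dot_list (isotropic_half_fibers ! i) (cls_list (isotropic_half_fibers ! j)) = (if i = j then 0 else 1))
     [0..<5]) [0..<5]"
  by code_simp

lemma iso_seq_isotropic_half_fibers:
  assumes N: "num_model N"
  shows "iso_seq N isotropic_half_fibers"
  using isotropic_half_fibers_eval
  by (auto simp: iso_seq_def HFcls_eq[OF N] cls_eq_vec_cls_list dot_eq_dot_list list_all_iff)

lemma cnd_eq_5:
  assumes N: "num_model N"
  shows "cnd N = 5"
  unfolding cnd_def
proof (rule Greatest_equality)
  show "\<exists>fs. length fs = 5 \<and> iso_seq N fs"
    using iso_seq_isotropic_half_fibers[OF N] isotropic_half_fibers_eval by blast
qed (use iso_seq_length_le[OF N] in blast)

theorem proposition6p4: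
  fixes N :: "qdiv set"
  assumes "num_model N"
  shows "image_mset (fib_type N) (mset_set (HFcls N)) =
           replicate_mset 1 {#(A 1, HalfFib), (A 1, HalfFib)#}
         + replicate_mset 4 {#(A 3, Fib)#}
         + replicate_mset 8 {#(A 3, HalfFib)#}
         + replicate_mset 2 {#(D 4, Fib), (D 4, Fib)#}
       \<and> cnd N = 5
       \<and> iso_seq N
          [divR [(1,1/2),(2,1/2),(3,1/2),(6,1/2)],
           divR [(1,1/2),(4,1/2),(5,1/2),(6,1/2)],
           divR [(7,1/2),(8,1/2),(9,1/2),(12,1/2)],
           divR [(7,1/2),(10,1/2),(11,1/2),(12,1/2)],
           divR [(1,1),(12,1)]]"
  using fibration_types_cycle_table[OF assms] fibration_types_eval cnd_eq_5[OF assms]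
    iso_seq_isotropic_half_fibers[OF assms]
  unfolding isotropic_half_fibers_def by simp

end
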